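(* Let $N\ge0$ and let $\hat A=\sum_{n,m=0}^N A_{n,m}|n\rangle\langle m|$ be a single-mode operator supported on Fock states with at most $N$ photons. Then $\hat A$ has approximate operator coherent rank at most $N+1$. One explicit representation is, for nonzero real $\epsilon$, $$\tilde{\hat A}=\sum_{k,l=0}^N c_{k,l}\,\big|\epsilon e^{2\pi i k/(N+1)}\big\rangle\big\langle \epsilon e^{2\pi i l/(N+1)}\big|,\qquad c_{k,l}=\frac{e^{|\epsilon|^2}}{(N+1)^2}\sum_{n,m=0}^N\sqrt{n!m!}\,\frac{A_{n,m}}{\epsilon^{n+m}}\,e^{-2\pi i(kn-lm)/(N+1)},$$ which approximates $\hat A$ arbitrarily accurately as $\epsilon\to0$.
   Context: Single-mode Fock basis $\{|n\rangle\}$; coherent states $|\alpha\rangle=e^{-|\alpha|^2/2}\sum_n\frac{\alpha^n}{\sqrt{n!}}|n\rangle$ (kets with complex arguments such as $\epsilon e^{2\pi ik/(N+1)}$ are coherent states). A state has coherent rank $k$ if it is a superposition of $k$ coherent states; its approximate coherent rank is the smallest $k$ such that for every $\delta>0$ there is a coherent rank $k$ state with fidelity $>1-\delta$ to it. An operator $\hat A$ has (approximate) operator coherent rank $\ell$ iff $\hat A|\vec\alpha\rangle$ has (approximate) coherent rank at most $\ell$ for every coherent state $|\vec\alpha\rangle$. *)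

theory Defs
  imports "HOL-Analysis.Analysis"
begin

text \<open>Single-mode states are represented by their Fock-basis amplitudes
  \<open>\<psi> :: nat \<Rightarrow> complex\<close> (\<open>\<psi> n = \<langle>n|\<psi>\<rangle>\<close>).\<close>

definition coh :: "complex \<Rightarrow> nat \<Rightarrow> complex" where
  "coh \<alpha> n = complex_of_real (exp (- (cmod \<alpha>)\<^sup>2 / 2)) * \<alpha> ^ n
               / complex_of_real (sqrt (fact n))"

definition inner_st :: "(nat \<Rightarrow> complex) \<Rightarrow> (nat \<Rightarrow> complex) \<Rightarrow> complex" where
  "inner_st \<phi> \<psi> = infsum (\<lambda>n. cnj (\<phi> n) * \<psi> n) UNIV"

definition sqnorm_st :: "(nat \<Rightarrow> complex) \<Rightarrow> real" where
  "sqnorm_st \<psi> = infsum (\<lambda>n. (cmod (\<psi> n))\<^sup>2) UNIV"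

definition norm_st :: "(nat \<Rightarrow> complex) \<Rightarrow> real" where
  "norm_st \<psi> = sqrt (sqnorm_st \<psi>)"

definition fidelity :: "(nat \<Rightarrow> complex) \<Rightarrow> (nat \<Rightarrow> complex) \<Rightarrow> real" where
  "fidelity \<psi> \<phi> = (cmod (inner_st \<psi> \<phi>))\<^sup>2 / (sqnorm_st \<psi> * sqnorm_st \<phi>)"

definition coh_rank_le :: "nat \<Rightarrow> (nat \<Rightarrow> complex) \<Rightarrow> bool" where
  "coh_rank_le k \<psi> \<longleftrightarrow>
     (\<exists>(c :: nat \<Rightarrow> complex) (a :: nat \<Rightarrow> complex). \<psi> = (\<lambda>n. \<Sum>j<k. c j * coh (a j) n))"

text \<open>Approximate coherent rank at most \<open>k\<close>. The zero vector is the empty superposition.\<close>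
definition approx_coh_rank_le :: "nat \<Rightarrow> (nat \<Rightarrow> complex) \<Rightarrow> bool" where
  "approx_coh_rank_le k \<psi> \<longleftrightarrow>
     \<psi> = (\<lambda>_. 0) \<or>
     (\<forall>\<delta>>0. \<exists>\<phi>. coh_rank_le k \<phi> \<and> fidelity \<psi> \<phi> > 1 - \<delta>)"

definition approx_op_coh_rank_le ::
    "nat \<Rightarrow> ((nat \<Rightarrow> complex) \<Rightarrow> (nat \<Rightarrow> complex)) \<Rightarrow> bool" where
  "approx_op_coh_rank_le k Aop \<longleftrightarrow> (\<forall>\<alpha>. approx_coh_rank_le k (Aop (coh \<alpha>)))"

definition fock_op :: "nat \<Rightarrow> (nat \<Rightarrow> nat \<Rightarrow> complex) \<Rightarrow> (nat \<Rightarrow> complex) \<Rightarrow> (nat \<Rightarrow> complex)" where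
  "fock_op N A \<psi> = (\<lambda>p. if p \<le> N then (\<Sum>m\<le>N. A p m * \<psi> m) else 0)"

definition root_pt :: "nat \<Rightarrow> nat \<Rightarrow> complex" where
  "root_pt N k = exp (2 * complex_of_real pi * \<i> * of_nat k / of_nat (N + 1))"

definition approx_coef :: "nat \<Rightarrow> (nat \<Rightarrow> nat \<Rightarrow> complex) \<Rightarrow> real \<Rightarrow> nat \<Rightarrow> nat \<Rightarrow> complex" where
  "approx_coef N A \<epsilon> k l =
     complex_of_real (exp (\<bar>\<epsilon>\<bar>\<^sup>2)) / (of_nat (N + 1))\<^sup>2 *
     (\<Sum>n\<le>N. \<Sum>m\<le>N. complex_of_real (sqrt (fact n * fact m)) * A n m
        / (complex_of_real \<epsilon>) ^ (n + m)
        * exp (- 2 * complex_of_real pi * \<i> * (of_nat (k * n) - of_nat (l * m)) / of_nat (N + 1)))"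

definition approx_op :: "nat \<Rightarrow> (nat \<Rightarrow> nat \<Rightarrow> complex) \<Rightarrow> real \<Rightarrow> (nat \<Rightarrow> complex) \<Rightarrow> (nat \<Rightarrow> complex)" where
  "approx_op N A \<epsilon> \<psi> = (\<lambda>p. \<Sum>k\<le>N. \<Sum>l\<le>N.
      approx_coef N A \<epsilon> k l * coh (complex_of_real \<epsilon> * root_pt N k) p
        * inner_st (coh (complex_of_real \<epsilon> * root_pt N l)) \<psi>)"

end

theory Submission
  imports Defs
begin

text \<open>
  Let \<open>\<omega> = root_pt N 1\<close>. By orthogonality of the characters \<open>k \<mapsto> \<omega>\<^sup>k\<^sup>n\<close> of the cyclic
  group of order \<open>N + 1\<close>, the combination \<open>fourier_ket N \<epsilon> n\<close> of the coherent states
  \<open>|\<epsilon>\<omega>\<^sup>k\<rangle>\<close> retains exactly the Fock components \<open>p \<equiv> n (mod N + 1)\<close>: for \<open>n \<le> N\<close> it is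
  \<open>|n\<rangle>\<close> plus components of size \<open>\<epsilon>\<^bsup>p - n\<^esup>\<close> with \<open>p > N\<close> (\<open>alias_ket\<close>). The approximating
  operator is \<open>\<Sum> A n m |f\<^sub>n\<rangle>\<langle>f\<^sub>m|\<close> with \<open>f\<^sub>n = fourier_ket N \<epsilon> n\<close>, so on a coherent state its \<open>p\<close>-th amplitude
  differs from that of the Fock-space operator by at most \<open>M |\<epsilon>| 2\<^sup>-\<^sup>p\<close>. This gives the
  convergence in norm. Moreover the approximant is a superposition of the \<open>N + 1\<close> coherent
  states \<open>|\<epsilon>\<omega>\<^sup>k\<rangle>\<close>, while the exact image of a coherent state has finite support, so the
  fidelity between them tends to 1 as \<open>\<epsilon> \<rightarrow> 0\<close>.
\<close>

lemma has_sum_sum: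
  fixes f :: "'i \<Rightarrow> 'a \<Rightarrow> 'b::topological_comm_monoid_add"
  assumes "finite I" "\<And>i. i \<in> I \<Longrightarrow> (f i has_sum s i) A"
  shows "((\<lambda>x. \<Sum>i\<in>I. f i x) has_sum (\<Sum>i\<in>I. s i)) A"
  using assms by (induction I rule: finite_induct) (auto intro: has_sum_add)

lemma infsum_sum:
  fixes f :: "'i \<Rightarrow> 'a \<Rightarrow> 'b::{topological_comm_monoid_add, t2_space}"
  assumes "finite I" "\<And>i. i \<in> I \<Longrightarrow> f i summable_on A"
  shows "infsum (\<lambda>x. \<Sum>i\<in>I. f i x) A = (\<Sum>i\<in>I. infsum (f i) A)"
  by (rule infsumI, rule has_sum_sum) (use assms in auto)

lemma norm_infsum_le_has_sum:
  fixes f :: "'a \<Rightarrow> 'b::banach"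
  assumes b: "(b has_sum B) A" and le: "\<And>x. x \<in> A \<Longrightarrow> norm (f x) \<le> b x"
  shows "f summable_on A" "norm (infsum f A) \<le> B"
proof -
  have "b summable_on A" using b by (rule has_sum_imp_summable)
  then have abs: "(\<lambda>x. norm (f x)) summable_on A"
    using le by (rule Infinite_Sum.abs_summable_on_comparison_test')
  then show "f summable_on A" by (rule abs_summable_summable)
  have "norm (infsum f A) \<le> infsum (\<lambda>x. norm (f x)) A"
    using abs by (rule norm_infsum_bound)
  also have "\<dots> \<le> infsum b A"
    using abs \<open>b summable_on A\<close> le by (rule infsum_mono)
  also have "\<dots> = B" using b by (rule infsumI)
  finally show "norm (infsum f A) \<le> B" .
qed

lemma has_sum_exp_nonneg:
  assumes "0 \<le> (x::real)"
  shows "((\<lambda>j. x ^ j / fact j) has_sum exp x) UNIV"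
proof -
  have "(\<lambda>j. x ^ j / fact j) sums exp x"
    using exp_converges[of x] by (simp add: divide_inverse mult.commute)
  then show ?thesis by (rule sums_nonneg_imp_has_sum) (use assms in simp)
qed

lemma has_sum_eq_sum_atMost:
  fixes f :: "nat \<Rightarrow> 'a::topological_comm_monoid_add"
  assumes "\<And>p. N < p \<Longrightarrow> f p = 0"
  shows "(f has_sum (\<Sum>p\<le>N. f p)) UNIV"
proof -
  have "(f has_sum (\<Sum>p\<le>N. f p)) {..N}" by simp
  then show ?thesis
    by (rule has_sum_cong_neutral[THEN iffD1, rotated -1]) (use assms in auto)
qed

text \<open>The geometric domination is what makes the infinite sums below genuine: \<open>infsum\<close> of a
  non-summable family is \<open>0\<close>.\<close>

lemma geometric_sq_bound:
  fixes f :: "nat \<Rightarrow> 'a::real_normed_vector" and h :: "nat \<Rightarrow> real"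
  assumes f: "\<And>p. norm (f p) \<le> c * (1/2) ^ p"
    and h: "\<And>p. 0 \<le> h p" "\<And>p. h p \<le> (norm (f p))\<^sup>2"
  shows "h summable_on UNIV" "infsum h UNIV \<le> 4/3 * c\<^sup>2"
proof -
  have "(\<lambda>p. (1/4::real) ^ p) sums (1 / (1 - 1/4))" by (rule geometric_sums) simp
  then have "((\<lambda>p. (1/4::real) ^ p) has_sum 4/3) UNIV"
    by (intro sums_nonneg_imp_has_sum) simp_all
  then have geom: "((\<lambda>p. c\<^sup>2 * (1/4) ^ p) has_sum 4/3 * c\<^sup>2) UNIV"
    using has_sum_cmult_right by (metis mult.commute)
  have h_le: "h p \<le> c\<^sup>2 * (1/4) ^ p" for p
  proof -
    have "(norm (f p))\<^sup>2 \<le> (c * (1/2) ^ p)\<^sup>2"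
      using f by (rule power_mono) simp
    also have "\<dots> = c\<^sup>2 * ((1/2)\<^sup>2) ^ p"
      by (simp only: power_mult_distrib power_mult[symmetric] mult.commute)
    also have "\<dots> = c\<^sup>2 * (1/4) ^ p"
      by (simp add: power2_eq_square)
    finally show ?thesis using h(2)[of p] by linarith
  qed
  show summable: "h summable_on UNIV"
    by (rule summable_on_comparison_test[OF has_sum_imp_summable[OF geom] h_le h(1)])
  have "infsum h UNIV \<le> infsum (\<lambda>p. c\<^sup>2 * (1/4) ^ p) UNIV"
    by (rule infsum_mono[OF summable has_sum_imp_summable[OF geom] h_le])
  also have "\<dots> = 4/3 * c\<^sup>2" using geom by (rule infsumI)
  finally show "infsum h UNIV \<le> 4/3 * c\<^sup>2" .
qed

lemma sum_swap_pairs: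
  "(\<Sum>k\<in>K. \<Sum>l\<in>L. \<Sum>n\<in>N. \<Sum>m\<in>M. f k l n m) = (\<Sum>n\<in>N. \<Sum>m\<in>M. \<Sum>k\<in>K. \<Sum>l\<in>L. f k l n m)"
proof -
  have "(\<Sum>k\<in>K. \<Sum>l\<in>L. \<Sum>n\<in>N. \<Sum>m\<in>M. f k l n m) = (\<Sum>k\<in>K. \<Sum>n\<in>N. \<Sum>l\<in>L. \<Sum>m\<in>M. f k l n m)"
    by (intro sum.cong refl sum.swap)
  also have "\<dots> = (\<Sum>n\<in>N. \<Sum>k\<in>K. \<Sum>l\<in>L. \<Sum>m\<in>M. f k l n m)"
    by (rule sum.swap)
  also have "\<dots> = (\<Sum>n\<in>N. \<Sum>k\<in>K. \<Sum>m\<in>M. \<Sum>l\<in>L. f k l n m)"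
    by (intro sum.cong refl sum.swap)
  also have "\<dots> = (\<Sum>n\<in>N. \<Sum>m\<in>M. \<Sum>k\<in>K. \<Sum>l\<in>L. f k l n m)"
    by (intro sum.cong refl sum.swap)
  finally show ?thesis .
qed

lemma norm_root_pt [simp]: "cmod (root_pt N k) = 1"
  unfolding root_pt_def by (simp add: norm_exp_eq_Re)

lemma cnj_root_pt: "cnj (root_pt N k) = inverse (root_pt N k)"
  unfolding root_pt_def by (simp add: exp_cnj exp_minus[symmetric])

lemma root_pt_power_commute: "root_pt N k ^ a = root_pt N a ^ k"
proof -
  have "root_pt N k ^ a = exp (of_nat a * (2 * complex_of_real pi * \<i> * of_nat k / of_nat (N + 1)))"
    unfolding root_pt_def by (simp only: exp_of_nat_mult)
  also have "\<dots> = exp (of_nat k * (2 * complex_of_real pi * \<i> * of_nat a / of_nat (N + 1)))"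
    by (simp add: field_simps)
  also have "\<dots> = root_pt N a ^ k"
    unfolding root_pt_def by (simp only: exp_of_nat_mult)
  finally show ?thesis .
qed

lemma root_pt_power_order: "root_pt N a ^ (N + 1) = 1"
  unfolding root_pt_def using complex_root_unity[of "N + 1" a] by simp

lemma root_pt_eq_iff: "root_pt N a = root_pt N b \<longleftrightarrow> a mod (N + 1) = b mod (N + 1)"
  unfolding root_pt_def using complex_root_unity_eq[of "N + 1" a b] by simp

lemma sum_root_pt_power_cnj_power:
  "(\<Sum>k\<le>N. root_pt N k ^ a * cnj (root_pt N k) ^ b) =
     (if a mod (N + 1) = b mod (N + 1) then of_nat (N + 1) else 0)"
proof -
  define q where "q = root_pt N a / root_pt N b"
  have nz: "root_pt N b \<noteq> 0"
    using norm_root_pt[of N b] by (metis norm_zero zero_neq_one)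
  have "(\<Sum>k\<le>N. root_pt N k ^ a * cnj (root_pt N k) ^ b) = (\<Sum>k<N + 1. q ^ k)"
    unfolding q_def
    by (intro sum.cong) (auto simp: cnj_root_pt root_pt_power_commute[of N _ a]
        root_pt_power_commute[of N _ b] power_divide field_simps power_inverse)
  also have "\<dots> = (if a mod (N + 1) = b mod (N + 1) then of_nat (N + 1) else 0)"
  proof (cases "a mod (N + 1) = b mod (N + 1)")
    case True
    then have "q = 1" unfolding q_def using root_pt_eq_iff[of N a b] nz by simp
    then show ?thesis using True by simp
  next
    case False
    then have "q \<noteq> 1" unfolding q_def using root_pt_eq_iff[of N a b] nz by simp
    moreover have "q ^ (N + 1) = 1" unfolding q_def power_divide root_pt_power_order by simp
    ultimately show ?thesis using False by (subst sum_gp_strict) simp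
  qed
  finally show ?thesis .
qed

lemma exp_phase_eq_root_pt_powers:
  "exp (- 2 * complex_of_real pi * \<i> * (of_nat (k * n) - of_nat (l * m)) / of_nat (N + 1))
     = cnj (root_pt N k) ^ n * root_pt N l ^ m"
proof -
  have "cnj (root_pt N k) ^ n * root_pt N l ^ m = cnj (root_pt N k ^ n) * root_pt N l ^ m"
    by simp
  also have "\<dots> = exp (cnj (of_nat n * (2 * complex_of_real pi * \<i> * of_nat k / of_nat (N + 1)))
      + of_nat m * (2 * complex_of_real pi * \<i> * of_nat l / of_nat (N + 1)))"
    unfolding root_pt_def exp_of_nat_mult[symmetric] exp_cnj exp_add by simp
  also have "\<dots> = exp (- 2 * complex_of_real pi * \<i> * (of_nat (k * n) - of_nat (l * m)) / of_nat (N + 1))"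
    by (rule arg_cong[where f=exp]) (simp add: add_divide_distrib[symmetric] algebra_simps)
  finally show ?thesis by simp
qed

lemma coh_of_real_mult_root_pt:
  "coh (of_real \<epsilon> * root_pt N k) p =
     of_real (exp (- \<epsilon>\<^sup>2 / 2) * \<epsilon> ^ p / sqrt (fact p)) * root_pt N k ^ p"
proof -
  have "(cmod (of_real \<epsilon> * root_pt N k))\<^sup>2 = \<epsilon>\<^sup>2"
    by (simp add: norm_mult)
  then show ?thesis unfolding coh_def by (simp add: power_mult_distrib)
qed

lemma norm_coh_le: "cmod (coh \<beta> j) \<le> cmod \<beta> ^ j / sqrt (fact j)"
  unfolding coh_def
  by (simp add: norm_mult norm_divide norm_power divide_right_mono mult_left_le_one_le)

lemma summable_cnj_coh_mult_coh: "(\<lambda>j. cnj (coh \<alpha> j) * coh \<beta> j) summable_on UNIV"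
proof (rule norm_infsum_le_has_sum)
  show "((\<lambda>j. (cmod \<alpha> * cmod \<beta>) ^ j / fact j) has_sum exp (cmod \<alpha> * cmod \<beta>)) UNIV"
    by (rule has_sum_exp_nonneg) simp
  fix j
  have "cmod (cnj (coh \<alpha> j) * coh \<beta> j) \<le> cmod \<alpha> ^ j / sqrt (fact j) * (cmod \<beta> ^ j / sqrt (fact j))"
    unfolding norm_mult complex_mod_cnj by (intro mult_mono norm_coh_le) auto
  then show "cmod (cnj (coh \<alpha> j) * coh \<beta> j) \<le> (cmod \<alpha> * cmod \<beta>) ^ j / fact j"
    by (simp add: power_mult_distrib)
qed

definition fourier_ket :: "nat \<Rightarrow> real \<Rightarrow> nat \<Rightarrow> nat \<Rightarrow> complex" where
  "fourier_ket N \<epsilon> n p =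
     of_real (exp (\<epsilon>\<^sup>2 / 2) * sqrt (fact n) / \<epsilon> ^ n) / of_nat (N + 1) *
     (\<Sum>k\<le>N. cnj (root_pt N k) ^ n * coh (of_real \<epsilon> * root_pt N k) p)"

text \<open>The exponent \<open>p - n\<close> is never truncated: \<open>p mod (N + 1) = n\<close> implies \<open>n \<le> p\<close>.\<close>

definition alias_ket :: "nat \<Rightarrow> real \<Rightarrow> nat \<Rightarrow> nat \<Rightarrow> complex" where
  "alias_ket N \<epsilon> n p =
     (if p mod (N + 1) = n then of_real (sqrt (fact n) / sqrt (fact p) * \<epsilon> ^ (p - n)) else 0)"

lemma fourier_ket_eq_alias_ket:
  assumes "\<epsilon> \<noteq> 0" "n \<le> N"
  shows "fourier_ket N \<epsilon> n = alias_ket N \<epsilon> n"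
proof
  fix p
  have "(\<Sum>k\<le>N. cnj (root_pt N k) ^ n * coh (of_real \<epsilon> * root_pt N k) p)
      = of_real (exp (- \<epsilon>\<^sup>2 / 2) * \<epsilon> ^ p / sqrt (fact p)) *
        (\<Sum>k\<le>N. root_pt N k ^ p * cnj (root_pt N k) ^ n)"
    by (simp add: coh_of_real_mult_root_pt sum_distrib_left sum_divide_distrib mult_ac)
  also have "\<dots> = (if p mod (N + 1) = n
      then of_real (exp (- \<epsilon>\<^sup>2 / 2) * \<epsilon> ^ p / sqrt (fact p)) * of_nat (N + 1) else 0)"
    using assms(2) by (simp add: sum_root_pt_power_cnj_power)
  finally have sum_eq: "(\<Sum>k\<le>N. cnj (root_pt N k) ^ n * coh (of_real \<epsilon> * root_pt N k) p) = \<dots>" .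
  show "fourier_ket N \<epsilon> n p = alias_ket N \<epsilon> n p"
  proof (cases "p mod (N + 1) = n")
    case True
    then have "n \<le> p" by (metis mod_less_eq_dividend)
    have "(of_nat (N + 1) :: complex) \<noteq> 0" by (simp only: of_nat_eq_0_iff)
    then have "fourier_ket N \<epsilon> n p = of_real (exp (\<epsilon>\<^sup>2 / 2) * sqrt (fact n) / \<epsilon> ^ n *
        (exp (- \<epsilon>\<^sup>2 / 2) * \<epsilon> ^ p / sqrt (fact p)))"
      unfolding fourier_ket_def sum_eq of_real_mult using True by simp
    also have "exp (\<epsilon>\<^sup>2 / 2) * sqrt (fact n) / \<epsilon> ^ n * (exp (- \<epsilon>\<^sup>2 / 2) * \<epsilon> ^ p / sqrt (fact p))
        = sqrt (fact n) / sqrt (fact p) * \<epsilon> ^ (p - n)"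
      using assms(1) \<open>n \<le> p\<close> by (simp add: power_diff exp_minus field_simps)
    finally show ?thesis unfolding alias_ket_def using True by simp
  qed (simp add: fourier_ket_def alias_ket_def sum_eq)
qed

lemma inner_fourier_ket:
  assumes "\<And>l. (\<lambda>j. cnj (coh (of_real \<epsilon> * root_pt N l) j) * \<psi> j) summable_on UNIV"
  shows "inner_st (fourier_ket N \<epsilon> m) \<psi> =
    of_real (exp (\<epsilon>\<^sup>2 / 2) * sqrt (fact m) / \<epsilon> ^ m) / of_nat (N + 1) *
    (\<Sum>l\<le>N. root_pt N l ^ m * inner_st (coh (of_real \<epsilon> * root_pt N l)) \<psi>)"
proof -
  let ?c = "of_real (exp (\<epsilon>\<^sup>2 / 2) * sqrt (fact m) / \<epsilon> ^ m) / of_nat (N + 1) :: complex"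
  have "(\<lambda>j. cnj (fourier_ket N \<epsilon> m j) * \<psi> j) =
      (\<lambda>j. ?c * (\<Sum>l\<le>N. root_pt N l ^ m * (cnj (coh (of_real \<epsilon> * root_pt N l) j) * \<psi> j)))"
    unfolding fourier_ket_def by (simp add: sum_distrib_left sum_distrib_right mult_ac)
  then have "inner_st (fourier_ket N \<epsilon> m) \<psi> =
      ?c * infsum (\<lambda>j. \<Sum>l\<le>N. root_pt N l ^ m * (cnj (coh (of_real \<epsilon> * root_pt N l) j) * \<psi> j)) UNIV"
    unfolding inner_st_def by (simp only: infsum_cmult_right')
  also have "\<dots> = ?c * (\<Sum>l\<le>N. root_pt N l ^ m * inner_st (coh (of_real \<epsilon> * root_pt N l)) \<psi>)"
    unfolding inner_st_def
    by (simp add: infsum_sum assms summable_on_cmult_right infsum_cmult_right')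
  finally show ?thesis .
qed

lemma approx_op_eq_fourier_ket:
  assumes "\<And>l. (\<lambda>j. cnj (coh (of_real \<epsilon> * root_pt N l) j) * \<psi> j) summable_on UNIV"
  shows "approx_op N A \<epsilon> \<psi> p =
    (\<Sum>n\<le>N. \<Sum>m\<le>N. A n m * fourier_ket N \<epsilon> n p * inner_st (fourier_ket N \<epsilon> m) \<psi>)"
proof -
  define c where "c n = (of_real (exp (\<epsilon>\<^sup>2 / 2) * sqrt (fact n) / \<epsilon> ^ n) / of_nat (N + 1) :: complex)"
    for n
  let ?ket = "\<lambda>k. coh (of_real \<epsilon> * root_pt N k) p"
  let ?bra = "\<lambda>l. inner_st (coh (of_real \<epsilon> * root_pt N l)) \<psi>"
  let ?T = "\<lambda>n m k l. A n m * c n * c m * (cnj (root_pt N k) ^ n * root_pt N l ^ m) * ?ket k * ?bra l"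
  have coef: "approx_coef N A \<epsilon> k l = (\<Sum>n\<le>N. \<Sum>m\<le>N. A n m * c n * c m *
      (cnj (root_pt N k) ^ n * root_pt N l ^ m))" for k l
  proof -
    have entry: "complex_of_real (exp (\<bar>\<epsilon>\<bar>\<^sup>2)) / (of_nat (N + 1))\<^sup>2 *
        (complex_of_real (sqrt (fact n * fact m)) * A n m / complex_of_real \<epsilon> ^ (n + m) * P)
        = A n m * c n * c m * P" for n m P
      unfolding c_def
      by (simp add: power2_eq_square real_sqrt_mult power_add exp_add[symmetric] field_simps
          flip: of_real_mult)
    show ?thesis
      unfolding approx_coef_def exp_phase_eq_root_pt_powers sum_distrib_left
      by (intro sum.cong refl entry)
  qed
  have "approx_op N A \<epsilon> \<psi> p = (\<Sum>k\<le>N. \<Sum>l\<le>N. \<Sum>n\<le>N. \<Sum>m\<le>N. ?T n m k l)"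
    unfolding approx_op_def coef by (simp add: sum_distrib_right)
  also have "\<dots> = (\<Sum>n\<le>N. \<Sum>m\<le>N. \<Sum>k\<le>N. \<Sum>l\<le>N. ?T n m k l)"
    by (rule sum_swap_pairs)
  also have "\<dots> = (\<Sum>n\<le>N. \<Sum>m\<le>N. A n m * fourier_ket N \<epsilon> n p * inner_st (fourier_ket N \<epsilon> m) \<psi>)"
    unfolding inner_fourier_ket[OF assms] fourier_ket_def c_def[symmetric]
    by (simp add: sum_distrib_left sum_distrib_right mult_ac)
  finally show ?thesis .
qed

lemma coh_rank_le_approx_op: "coh_rank_le (N + 1) (approx_op N A \<epsilon> \<psi>)"
  unfolding coh_rank_le_def
proof (intro exI)
  show "approx_op N A \<epsilon> \<psi> = (\<lambda>p. \<Sum>k<N + 1.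
     (\<lambda>k. \<Sum>l\<le>N. approx_coef N A \<epsilon> k l * inner_st (coh (of_real \<epsilon> * root_pt N l)) \<psi>) k *
     coh ((\<lambda>k. of_real \<epsilon> * root_pt N k) k) p)"
    unfolding approx_op_def
    by (intro ext, simp only: Suc_eq_plus1[symmetric] lessThan_Suc_atMost)
       (simp add: sum_distrib_left mult_ac)
qed

lemma approx_op_coh_eq_alias_ket:
  assumes "\<epsilon> \<noteq> 0"
  shows "approx_op N A \<epsilon> (coh \<beta>) p =
    (\<Sum>n\<le>N. \<Sum>m\<le>N. A n m * alias_ket N \<epsilon> n p * inner_st (alias_ket N \<epsilon> m) (coh \<beta>))"
  unfolding approx_op_eq_fourier_ket[OF summable_cnj_coh_mult_coh]
  by (intro sum.cong refl) (simp add: fourier_ket_eq_alias_ket[OF assms])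

lemma norm_alias_ket_le:
  assumes "\<bar>\<epsilon>\<bar> \<le> 1"
  shows "cmod (alias_ket N \<epsilon> n p) \<le> (if p = n then 1 else \<bar>\<epsilon>\<bar>) * (sqrt (fact n) / sqrt (fact p))"
proof (cases "p mod (N + 1) = n \<and> p \<noteq> n")
  case True
  then have "n < p" by (metis le_neq_implies_less mod_less_eq_dividend)
  then have "\<bar>\<epsilon>\<bar> ^ (p - n) \<le> \<bar>\<epsilon>\<bar> ^ 1"
    by (intro power_decreasing) (use assms in auto)
  then have "sqrt (fact n) / sqrt (fact p) * \<bar>\<epsilon>\<bar> ^ (p - n) \<le> sqrt (fact n) / sqrt (fact p) * \<bar>\<epsilon>\<bar>"
    by (intro mult_left_mono) auto
  moreover have "cmod (alias_ket N \<epsilon> n p) = sqrt (fact n) / sqrt (fact p) * \<bar>\<epsilon>\<bar> ^ (p - n)"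
    using True by (simp add: alias_ket_def norm_mult norm_divide norm_power)
  ultimately show ?thesis
    using True by (simp add: mult.commute)
qed (auto simp: alias_ket_def)

lemma norm_cnj_alias_ket_mult_coh_le:
  assumes "\<bar>\<epsilon>\<bar> \<le> 1"
  shows "cmod (cnj (alias_ket N \<epsilon> m j) * coh \<beta> j)
    \<le> (if j = m then 1 else \<bar>\<epsilon>\<bar>) * (sqrt (fact m) * (cmod \<beta> ^ j / fact j))"
proof -
  have "cmod (cnj (alias_ket N \<epsilon> m j) * coh \<beta> j)
      \<le> (if j = m then 1 else \<bar>\<epsilon>\<bar>) * (sqrt (fact m) / sqrt (fact j)) * (cmod \<beta> ^ j / sqrt (fact j))"
    unfolding norm_mult complex_mod_cnj
    using norm_alias_ket_le[OF assms] by (intro mult_mono norm_coh_le) auto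
  also have "\<dots> = (if j = m then 1 else \<bar>\<epsilon>\<bar>) *
      (sqrt (fact m) * (cmod \<beta> ^ j / (sqrt (fact j) * sqrt (fact j))))"
    by simp
  finally show ?thesis by simp
qed

lemma inner_alias_ket_coh_le:
  assumes "m \<le> N" "\<bar>\<epsilon>\<bar> \<le> 1"
  shows "cmod (inner_st (alias_ket N \<epsilon> m) (coh \<beta>)) \<le> sqrt (fact m) * exp (cmod \<beta>)"
    and "cmod (inner_st (alias_ket N \<epsilon> m) (coh \<beta>) - coh \<beta> m) \<le> \<bar>\<epsilon>\<bar> * (sqrt (fact m) * exp (cmod \<beta>))"
proof -
  define f where "f j = cnj (alias_ket N \<epsilon> m j) * coh \<beta> j" for j
  define b where "b j = sqrt (fact m) * (cmod \<beta> ^ j / fact j)" for j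
  have inner_eq: "inner_st (alias_ket N \<epsilon> m) (coh \<beta>) = infsum f UNIV"
    unfolding inner_st_def f_def ..
  have b: "(b has_sum sqrt (fact m) * exp (cmod \<beta>)) UNIV"
    unfolding b_def by (intro has_sum_cmult_right has_sum_exp_nonneg) simp
  have b_nonneg: "0 \<le> b j" for j unfolding b_def by simp
  have f_le: "cmod (f j) \<le> (if j = m then 1 else \<bar>\<epsilon>\<bar>) * b j" for j
    unfolding f_def b_def using assms(2) by (rule norm_cnj_alias_ket_mult_coh_le)
  also have "(if j = m then 1 else \<bar>\<epsilon>\<bar>) * b j \<le> b j" for j
    by (rule mult_left_le_one_le) (use assms(2) b_nonneg in auto)
  finally have f: "f summable_on UNIV" "cmod (infsum f UNIV) \<le> sqrt (fact m) * exp (cmod \<beta>)"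
    using norm_infsum_le_has_sum[OF b] by blast+
  then show "cmod (inner_st (alias_ket N \<epsilon> m) (coh \<beta>)) \<le> sqrt (fact m) * exp (cmod \<beta>)"
    unfolding inner_eq by blast
  have "insert m (- {m}) = UNIV" by auto
  then have "infsum f UNIV = f m + infsum f (- {m})"
    using infsum_insert[OF summable_on_subset_banach[OF f(1)], of "- {m}" m] by simp
  also have "infsum f (- {m}) = infsum (\<lambda>j. if j = m then 0 else f j) UNIV"
    by (rule infsum_cong_neutral) auto
  also have "f m = coh \<beta> m"
    unfolding f_def using assms(1) by (simp add: alias_ket_def)
  finally have "inner_st (alias_ket N \<epsilon> m) (coh \<beta>) - coh \<beta> m = infsum (\<lambda>j. if j = m then 0 else f j) UNIV"
    unfolding inner_eq by simp
  moreover have "cmod (if j = m then 0 else f j) \<le> \<bar>\<epsilon>\<bar> * b j" for j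
    using f_le[of j] b_nonneg[of j] by (cases "j = m") auto
  ultimately show "cmod (inner_st (alias_ket N \<epsilon> m) (coh \<beta>) - coh \<beta> m) \<le> \<bar>\<epsilon>\<bar> * (sqrt (fact m) * exp (cmod \<beta>))"
    using norm_infsum_le_has_sum(2)[OF has_sum_cmult_right[OF b, of "\<bar>\<epsilon>\<bar>"],
        where f = "\<lambda>j. if j = m then 0 else f j"] by simp
qed

lemma alias_ket_deviation_le:
  assumes "n \<le> N" "\<bar>\<epsilon>\<bar> \<le> 1/2"
  shows "cmod (alias_ket N \<epsilon> n p - (if p = n then 1 else 0)) \<le> \<bar>\<epsilon>\<bar> * 2 ^ (N + 1) * (1/2) ^ p"
proof (cases "p mod (N + 1) = n \<and> p \<noteq> n")
  case True
  then have "n < p" by (metis le_neq_implies_less mod_less_eq_dividend)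
  have "cmod (alias_ket N \<epsilon> n p) = sqrt (fact n) / sqrt (fact p) * \<bar>\<epsilon>\<bar> ^ (p - n)"
    using True by (simp add: alias_ket_def norm_mult norm_divide norm_power)
  also have "\<dots> \<le> \<bar>\<epsilon>\<bar> ^ (p - n)"
    using fact_mono[of n p, where 'a=real] \<open>n < p\<close>
    by (intro mult_left_le_one_le) (auto simp: divide_le_eq_1)
  also have "\<dots> = (2 * \<bar>\<epsilon>\<bar>) ^ (p - n) * 2 ^ n * (1/2) ^ p"
    using \<open>n < p\<close> by (simp add: power_mult_distrib power_diff power_one_over field_simps)
  also have "\<dots> \<le> (2 * \<bar>\<epsilon>\<bar>) * 2 ^ N * (1/2) ^ p"
  proof -
    have "(2 * \<bar>\<epsilon>\<bar>) ^ (p - n) \<le> (2 * \<bar>\<epsilon>\<bar>) ^ 1"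
      by (rule power_decreasing) (use assms \<open>n < p\<close> in auto)
    moreover have "(2::real) ^ n \<le> 2 ^ N"
      by (rule power_increasing) (use assms in auto)
    ultimately show ?thesis by (intro mult_right_mono mult_mono) auto
  qed
  also have "\<dots> = \<bar>\<epsilon>\<bar> * 2 ^ (N + 1) * (1/2) ^ p" by simp
  finally show ?thesis using True by simp
next
  case False
  then have "alias_ket N \<epsilon> n p = (if p = n then 1 else 0)"
    using assms(1) by (auto simp: alias_ket_def)
  then show ?thesis by simp
qed

lemma fock_op_eq_sum_delta:
  "fock_op N A \<psi> p = (\<Sum>n\<le>N. \<Sum>m\<le>N. A n m * (if p = n then 1 else 0) * \<psi> m)"
proof -
  have "(\<Sum>n\<le>N. \<Sum>m\<le>N. A n m * (if p = n then 1 else 0) * \<psi> m)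
      = (\<Sum>n\<le>N. if p = n then \<Sum>m\<le>N. A n m * \<psi> m else 0)"
    by (intro sum.cong) auto
  then show ?thesis by (simp add: fock_op_def)
qed

lemma alias_ket_matrix_entry_deviation_le:
  assumes "n \<le> N" "m \<le> N" "\<bar>\<epsilon>\<bar> \<le> 1/2"
  shows "cmod (alias_ket N \<epsilon> n p * inner_st (alias_ket N \<epsilon> m) (coh \<beta>)
      - (if p = n then 1 else 0) * coh \<beta> m)
    \<le> 2 ^ (N + 2) * \<bar>\<epsilon>\<bar> * (1/2) ^ p * (sqrt (fact m) * exp (cmod \<beta>))"
proof -
  define G where "G = 2 ^ (N + 1) * (1/2::real) ^ p"
  define \<delta> where "\<delta> = (if p = n then 1 else 0 :: complex)"
  define v where "v = inner_st (alias_ket N \<epsilon> m) (coh \<beta>)"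
  have \<delta>_le: "cmod \<delta> \<le> G"
  proof (cases "p = n")
    case True
    then have "(2::real) ^ p \<le> 2 ^ (N + 1)" using assms(1) by (intro power_increasing) auto
    then show ?thesis using True by (simp add: \<delta>_def G_def power_one_over field_simps)
  qed (simp add: \<delta>_def G_def)
  have "alias_ket N \<epsilon> n p * v - \<delta> * coh \<beta> m = (alias_ket N \<epsilon> n p - \<delta>) * v + \<delta> * (v - coh \<beta> m)"
    by (simp add: algebra_simps)
  then have "cmod (alias_ket N \<epsilon> n p * v - \<delta> * coh \<beta> m)
      \<le> cmod (alias_ket N \<epsilon> n p - \<delta>) * cmod v + cmod \<delta> * cmod (v - coh \<beta> m)"
    by (metis norm_mult norm_triangle_ineq)
  also have "\<dots> \<le> (\<bar>\<epsilon>\<bar> * G) * (sqrt (fact m) * exp (cmod \<beta>)) + G * (\<bar>\<epsilon>\<bar> * (sqrt (fact m) * exp (cmod \<beta>)))"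
    using alias_ket_deviation_le[OF assms(1,3), of p] \<delta>_le
      inner_alias_ket_coh_le[OF assms(2), of \<epsilon> \<beta>] assms(3)
    unfolding \<delta>_def[symmetric] v_def G_def
    by (intro add_mono mult_mono) (auto simp: mult.assoc)
  finally show ?thesis
    unfolding \<delta>_def v_def G_def by (simp add: algebra_simps)
qed

lemma approx_op_coh_error_le:
  "\<exists>M. eventually (\<lambda>\<epsilon>. \<forall>p. cmod (approx_op N A \<epsilon> (coh \<beta>) p - fock_op N A (coh \<beta>) p)
      \<le> M * \<bar>\<epsilon>\<bar> * (1/2) ^ p) (at 0)"
proof -
  define M where "M = 2 ^ (N + 2) * (\<Sum>n\<le>N. \<Sum>m\<le>N. cmod (A n m) * (sqrt (fact m) * exp (cmod \<beta>)))"
  have "cmod (approx_op N A \<epsilon> (coh \<beta>) p - fock_op N A (coh \<beta>) p) \<le> M * \<bar>\<epsilon>\<bar> * (1/2) ^ p"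
    if \<epsilon>: "\<epsilon> \<noteq> 0" "\<bar>\<epsilon>\<bar> \<le> 1/2" for \<epsilon> p
  proof -
    define B where "B m = 2 ^ (N + 2) * \<bar>\<epsilon>\<bar> * (1/2) ^ p * (sqrt (fact m) * exp (cmod \<beta>))" for m
    define D where "D n m = alias_ket N \<epsilon> n p * inner_st (alias_ket N \<epsilon> m) (coh \<beta>)
      - (if p = n then 1 else 0) * coh \<beta> m" for n m
    have "approx_op N A \<epsilon> (coh \<beta>) p - fock_op N A (coh \<beta>) p = (\<Sum>n\<le>N. \<Sum>m\<le>N. A n m * D n m)"
      unfolding approx_op_coh_eq_alias_ket[OF \<epsilon>(1)] fock_op_eq_sum_delta D_def
      by (simp add: sum_subtractf right_diff_distrib mult.assoc)
    also have "cmod \<dots> \<le> (\<Sum>n\<le>N. \<Sum>m\<le>N. cmod (A n m) * cmod (D n m))"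
      unfolding norm_mult[symmetric] by (intro order_trans[OF norm_sum] sum_mono norm_sum)
    also have "\<dots> \<le> (\<Sum>n\<le>N. \<Sum>m\<le>N. cmod (A n m) * B m)"
      unfolding D_def B_def
      by (intro sum_mono mult_left_mono alias_ket_matrix_entry_deviation_le \<epsilon>(2) norm_ge_zero) auto
    also have "\<dots> = M * \<bar>\<epsilon>\<bar> * (1/2) ^ p"
      by (simp add: M_def B_def sum_distrib_left sum_distrib_right mult_ac)
    finally show ?thesis .
  qed
  moreover have "eventually (\<lambda>\<epsilon>::real. \<epsilon> \<noteq> 0 \<and> \<bar>\<epsilon>\<bar> \<le> 1/2) (at 0)"
    unfolding eventually_at by (intro exI[of _ "1/2"]) auto
  ultimately show ?thesis
    by (intro exI[of _ M]) (auto elim!: eventually_mono)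
qed

lemma norm_st_tendsto_zero:
  assumes f: "eventually (\<lambda>x. \<forall>p. cmod (f x p) \<le> c x * (1/2) ^ p) F" and c: "(c \<longlongrightarrow> 0) F"
  shows "((\<lambda>x. norm_st (f x)) \<longlongrightarrow> 0) F"
proof (rule Lim_null_comparison)
  show "eventually (\<lambda>x. norm (norm_st (f x)) \<le> 2 * \<bar>c x\<bar>) F"
    using f
  proof eventually_elim
    case (elim x)
    have "sqnorm_st (f x) \<le> 4/3 * (c x)\<^sup>2"
      unfolding sqnorm_st_def using elim by (intro geometric_sq_bound(2)) auto
    also have "\<dots> \<le> (2 * \<bar>c x\<bar>)\<^sup>2" by (simp add: power_mult_distrib)
    finally have "sqrt (sqnorm_st (f x)) \<le> sqrt ((2 * \<bar>c x\<bar>)\<^sup>2)"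
      by (rule real_sqrt_le_mono)
    then have "sqrt (sqnorm_st (f x)) \<le> 2 * \<bar>c x\<bar>"
      by (simp only: real_sqrt_abs abs_mult abs_abs)
    moreover have "0 \<le> sqnorm_st (f x)"
      unfolding sqnorm_st_def by (intro infsum_nonneg) simp
    ultimately show ?case unfolding norm_st_def by simp
  qed
  show "((\<lambda>x. 2 * \<bar>c x\<bar>) \<longlongrightarrow> 0) F"
    using tendsto_mult_right_zero[OF tendsto_rabs_zero[OF c], of 2] by simp
qed

lemma sqnorm_st_split_tail:
  assumes supp: "\<And>p. N < p \<Longrightarrow> \<psi> p = 0" and close: "\<And>p. cmod (\<phi> p - \<psi> p) \<le> c * (1/2) ^ p"
  defines "T \<equiv> infsum (\<lambda>p. if p \<le> N then 0 else (cmod (\<phi> p))\<^sup>2) UNIV"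
  shows "sqnorm_st \<phi> = (\<Sum>p\<le>N. (cmod (\<phi> p))\<^sup>2) + T" and "0 \<le> T" and "T \<le> 4/3 * c\<^sup>2"
proof -
  let ?head = "\<lambda>p. if p \<le> N then (cmod (\<phi> p))\<^sup>2 else 0"
  let ?tail = "\<lambda>p. if p \<le> N then 0 else (cmod (\<phi> p))\<^sup>2"
  have tail_le: "?tail p \<le> (cmod (\<phi> p - \<psi> p))\<^sup>2" for p
    using supp[of p] by auto
  have "?tail summable_on UNIV" "T \<le> 4/3 * c\<^sup>2"
    unfolding T_def by (rule geometric_sq_bound[OF close _ tail_le], simp)+
  moreover have "(?head has_sum (\<Sum>p\<le>N. (cmod (\<phi> p))\<^sup>2)) UNIV"
    using has_sum_eq_sum_atMost[of N ?head] by simp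
  moreover have "sqnorm_st \<phi> = infsum (\<lambda>p. ?head p + ?tail p) UNIV"
    unfolding sqnorm_st_def by (rule infsum_cong) simp
  ultimately show "sqnorm_st \<phi> = (\<Sum>p\<le>N. (cmod (\<phi> p))\<^sup>2) + T" "T \<le> 4/3 * c\<^sup>2"
    by (simp_all add: T_def infsum_add has_sum_imp_summable infsumI)
  show "0 \<le> T" unfolding T_def by (intro infsum_nonneg) simp
qed

lemma tendsto_component_of_geometric_close:
  assumes close: "eventually (\<lambda>x. \<forall>p. cmod (\<phi> x p - \<psi> p) \<le> c x * (1/2) ^ p) F"
    and c: "(c \<longlongrightarrow> 0) F"
  shows "((\<lambda>x. \<phi> x p) \<longlongrightarrow> \<psi> p) F"
proof -
  have "((\<lambda>x. \<phi> x p - \<psi> p) \<longlongrightarrow> 0) F"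
  proof (rule Lim_null_comparison)
    show "eventually (\<lambda>x. norm (\<phi> x p - \<psi> p) \<le> c x * (1/2) ^ p) F"
      using close by eventually_elim auto
    show "((\<lambda>x. c x * (1/2) ^ p) \<longlongrightarrow> 0) F"
      using tendsto_mult_left_zero[OF c] by simp
  qed
  then show ?thesis by (simp add: LIM_zero_iff)
qed

lemma fidelity_tendsto_one:
  fixes \<psi> :: "nat \<Rightarrow> complex" and \<phi> :: "'a \<Rightarrow> nat \<Rightarrow> complex"
  assumes supp: "\<And>p. N < p \<Longrightarrow> \<psi> p = 0" and nonzero: "\<psi> \<noteq> (\<lambda>_. 0)"
    and close: "eventually (\<lambda>x. \<forall>p. cmod (\<phi> x p - \<psi> p) \<le> c x * (1/2) ^ p) F"
    and c: "(c \<longlongrightarrow> 0) F"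
  shows "((\<lambda>x. fidelity \<psi> (\<phi> x)) \<longlongrightarrow> 1) F"
proof -
  define S where "S = (\<Sum>p\<le>N. (cmod (\<psi> p))\<^sup>2)"
  define T where "T x = infsum (\<lambda>p. if p \<le> N then 0 else (cmod (\<phi> x p))\<^sup>2) UNIV" for x
  define R where "R x = (cmod (\<Sum>p\<le>N. cnj (\<psi> p) * \<phi> x p))\<^sup>2 /
    (S * ((\<Sum>p\<le>N. (cmod (\<phi> x p))\<^sup>2) + T x))" for x
  obtain q where q: "\<psi> q \<noteq> 0" using nonzero by auto
  then have "q \<le> N" using supp by (meson not_le)
  then have S_pos: "0 < S" unfolding S_def by (intro sum_pos2[of _ q]) (use q in auto)
  have sqnorm_\<psi>: "sqnorm_st \<psi> = S"
    unfolding sqnorm_st_def S_def by (rule infsumI, rule has_sum_eq_sum_atMost) (simp add: supp)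
  have inner: "inner_st \<psi> (\<phi> x) = (\<Sum>p\<le>N. cnj (\<psi> p) * \<phi> x p)" for x
    unfolding inner_st_def by (rule infsumI, rule has_sum_eq_sum_atMost) (simp add: supp)
  have "eventually (\<lambda>x. fidelity \<psi> (\<phi> x) = R x) F"
    using close
  proof eventually_elim
    case (elim x)
    show ?case
      using sqnorm_st_split_tail(1)[OF supp elim[rule_format]]
      by (simp add: fidelity_def R_def T_def sqnorm_\<psi> inner)
  qed
  moreover have "((\<lambda>x. \<phi> x p) \<longlongrightarrow> \<psi> p) F" for p
    using close c by (rule tendsto_component_of_geometric_close)
  moreover have "(T \<longlongrightarrow> 0) F"
  proof (rule Lim_null_comparison)
    show "eventually (\<lambda>x. norm (T x) \<le> 4/3 * (c x)\<^sup>2) F"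
      using close
    proof eventually_elim
      case (elim x)
      show ?case
        using sqnorm_st_split_tail(2,3)[OF supp elim[rule_format]] by (simp add: T_def)
    qed
    show "((\<lambda>x. 4/3 * (c x)\<^sup>2) \<longlongrightarrow> 0) F"
      using tendsto_mult[OF tendsto_const tendsto_power[OF c, of 2], of "4/3"] by simp
  qed
  ultimately have "(R \<longlongrightarrow> (cmod (\<Sum>p\<le>N. cnj (\<psi> p) * \<psi> p))\<^sup>2 / (S * (S + 0))) F"
    using S_pos unfolding R_def S_def by (intro tendsto_intros) auto
  also have "(\<Sum>p\<le>N. cnj (\<psi> p) * \<psi> p) = of_real S"
    unfolding S_def of_real_sum by (intro sum.cong refl) (simp only: complex_norm_square mult.commute)
  finally have "(R \<longlongrightarrow> 1) F"
    using S_pos by (simp add: power2_eq_square)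
  with \<open>eventually (\<lambda>x. fidelity \<psi> (\<phi> x) = R x) F\<close> show ?thesis
    by (simp add: tendsto_cong)
qed

lemma approx_coh_rank_le_of_fidelity_tendsto:
  assumes fidelity: "((\<lambda>x. fidelity \<psi> (\<phi> x)) \<longlongrightarrow> 1) F"
    and rank: "eventually (\<lambda>x. coh_rank_le k (\<phi> x)) F" and "F \<noteq> bot"
  shows "approx_coh_rank_le k \<psi>"
  unfolding approx_coh_rank_le_def
proof (intro disjI2 allI impI)
  fix \<delta> :: real assume "0 < \<delta>"
  then have "eventually (\<lambda>x. 1 - \<delta> < fidelity \<psi> (\<phi> x)) F"
    by (intro order_tendstoD(1)[OF fidelity]) simp
  with rank have "eventually (\<lambda>x. coh_rank_le k (\<phi> x) \<and> 1 - \<delta> < fidelity \<psi> (\<phi> x)) F"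
    by (rule eventually_conj)
  then show "\<exists>\<phi>. coh_rank_le k \<phi> \<and> fidelity \<psi> \<phi> > 1 - \<delta>"
    using eventually_happens'[OF \<open>F \<noteq> bot\<close>] by blast
qed

theorem proposition2:
  fixes N :: nat and A :: "nat \<Rightarrow> nat \<Rightarrow> complex"
  shows "approx_op_coh_rank_le (N + 1) (fock_op N A)
    \<and> (\<forall>\<beta>. ((\<lambda>\<epsilon>::real. norm_st (\<lambda>p. approx_op N A \<epsilon> (coh \<beta>) p - fock_op N A (coh \<beta>) p))
              \<longlongrightarrow> 0) (at 0))"
proof -
  have small: "((\<lambda>\<epsilon>::real. M * \<bar>\<epsilon>\<bar>) \<longlongrightarrow> 0) (at 0)" for M
    using tendsto_mult_right_zero[OF tendsto_rabs_zero[OF tendsto_ident_at], of M] by simp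
  have "approx_coh_rank_le (N + 1) (fock_op N A (coh \<alpha>))" for \<alpha>
  proof (cases "fock_op N A (coh \<alpha>) = (\<lambda>_. 0)")
    case False
    obtain M where "eventually (\<lambda>\<epsilon>. \<forall>p. cmod (approx_op N A \<epsilon> (coh \<alpha>) p - fock_op N A (coh \<alpha>) p)
        \<le> M * \<bar>\<epsilon>\<bar> * (1/2) ^ p) (at 0)"
      using approx_op_coh_error_le by blast
    then have "((\<lambda>\<epsilon>. fidelity (fock_op N A (coh \<alpha>)) (approx_op N A \<epsilon> (coh \<alpha>))) \<longlongrightarrow> 1) (at 0)"
      by (intro fidelity_tendsto_one[where N = N, OF _ False _ small]) (simp_all add: fock_op_def)
    moreover have "eventually (\<lambda>\<epsilon>. coh_rank_le (N + 1) (approx_op N A \<epsilon> (coh \<alpha>))) (at 0)"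
      by (intro always_eventually allI coh_rank_le_approx_op)
    ultimately show ?thesis
      by (rule approx_coh_rank_le_of_fidelity_tendsto) simp
  qed (simp add: approx_coh_rank_le_def)
  moreover have "((\<lambda>\<epsilon>::real. norm_st (\<lambda>p. approx_op N A \<epsilon> (coh \<beta>) p - fock_op N A (coh \<beta>) p))
      \<longlongrightarrow> 0) (at 0)" for \<beta>
  proof -
    obtain M where "eventually (\<lambda>\<epsilon>. \<forall>p. cmod (approx_op N A \<epsilon> (coh \<beta>) p - fock_op N A (coh \<beta>) p)
        \<le> M * \<bar>\<epsilon>\<bar> * (1/2) ^ p) (at 0)"
      using approx_op_coh_error_le by blast
    then show ?thesis by (rule norm_st_tendsto_zero[OF _ small])
  qed
  ultimately show ?thesis unfolding approx_op_coh_rank_le_def by blast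
qed

end
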